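(* Let $p_1,\dots,p_n>0$ with $\sum_i p_i=1$, let $c_1,\dots,c_n\in[-1,1]$, put $\bar c=\sum_i p_i c_i$, and fix $\Delta>0$. For $g\ge 0$ define $$I_a(g)=H_B\!\left(\frac{1+\sqrt{\bar c^{\,2}+(1-\bar c^{\,2})e^{-g^2/\Delta^2}}}{2}\right)-\sum_{i=1}^n p_i\,H_B\!\left(\frac{1+\sqrt{c_i^{2}+(1-c_i^{2})e^{-g^2/\Delta^2}}}{2}\right).$$ Then $I_a(g)$ is a monotonically non-decreasing function of $g$ on $[0,\infty)$.
   Context: $H_B(\lambda)=-\lambda\log_2\lambda-(1-\lambda)\log_2(1-\lambda)$ is the binary Shannon entropy (with $0\log 0=0$). Physical meaning: an ensemble of qubit states $\rho_i=\tfrac12\big(I+r_i(\sin\theta_i\cos\phi_i\,\sigma_x+\sin\theta_i\sin\phi_i\,\sigma_y+\cos\theta_i\,\sigma_z)\big)$, $0\le r_i\le1$, sent with probabilities $p_i$, is measured by a device with initial Gaussian wavefunction $\Phi(q)=(2\pi\Delta^2)^{-1/4}e^{-q^2/(4\Delta^2)}$ via the unitary $e^{-ig\sigma_z\otimes p}$ ($p$ the momentum operator of the device); with $c_i=r_i\cos\theta_i$, $I_a(g)=S(\rho'_D)-\sum_ip_iS(\rho'_{iD})$ is the information gain (Holevo quantity of the device states), where $\rho'_{iD}$ is the device state after interaction with $\rho_i$ and $\rho'_D=\sum_ip_i\rho'_{iD}$. *)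

theory Defs
  imports "HOL-Analysis.Analysis"
begin

definition binary_entropy :: "real \<Rightarrow> real" where
  "binary_entropy l =
     (if l = 0 then 0 else - l * log 2 l) +
     (if 1 - l = 0 then 0 else - (1 - l) * log 2 (1 - l))"

text \<open>The information gain I_a(g) for weights p, Bloch z-components c (indices 0..n-1),
  and device width Delta.\<close>
definition info_gain :: "nat \<Rightarrow> (nat \<Rightarrow> real) \<Rightarrow> (nat \<Rightarrow> real) \<Rightarrow> real \<Rightarrow> real \<Rightarrow> real" where
  "info_gain n p c D g =
     (let cbar = (\<Sum>i<n. p i * c i);
          E = exp (- (g^2) / (D^2))
      in binary_entropy ((1 + sqrt (cbar^2 + (1 - cbar^2) * E)) / 2)
         - (\<Sum>i<n. p i * binary_entropy ((1 + sqrt ((c i)^2 + (1 - (c i)^2) * E)) / 2)))"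

end

theory Submission imports Defs "HOL-Real_Asymp.Real_Asymp" begin

(*
  Write E = exp(-g^2/Delta^2) for the decoherence factor; it decreases from 1 to 0 as the
  coupling g grows.  A qubit with z-Bloch-component c leaves the device in a state with
  eigenvalue (1 + l)/2, where l = sqrt(c^2 + (1 - c^2) E) is the length of its Bloch vector.
  The proof differentiates in g:
   - d/dE H_B((1 + l)/2) = -K(E,c) / (2 ln 2), where K(E,c) = (1 - c^2) artanh(l) / l
     ("entropy_slope"), hence d/dg H_B((1 + l)/2) = g E K(E,c) / (Delta^2 ln 2);
   - K(E,c) = integral_0^1 (1 - c^2) / (1 - t^2 l^2) dt, and for every fixed t the integrand is
     a concave function of c (it lies below its tangent lines), so K(E,.) is concave;
   - Jensen's inequality for K(E,.) makes the derivative of I_a nonnegative for g > 0, and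
     continuity of I_a at g = 0 gives monotonicity on [0, oo).
  The file first treats the binary entropy, then the derivative along the decoherence,
  then the integral representation and concavity of K, and finally the theorem.
*)

definition decoherence :: "real \<Rightarrow> real \<Rightarrow> real" where
  "decoherence \<Delta> g = exp (- (g^2) / (\<Delta>^2))"

definition bloch_length :: "real \<Rightarrow> real \<Rightarrow> real" where
  "bloch_length E c = sqrt (c^2 + (1 - c^2) * E)"

definition entropy_slope :: "real \<Rightarrow> real \<Rightarrow> real" where
  "entropy_slope E c =
     (1 - c^2) * (ln (1 + bloch_length E c) - ln (1 - bloch_length E c)) / (2 * bloch_length E c)"

definition device_entropy :: "real \<Rightarrow> real \<Rightarrow> real \<Rightarrow> real" where
  "device_entropy \<Delta> c g = binary_entropy ((1 + bloch_length (decoherence \<Delta> g) c) / 2)"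

lemma bloch_length_bounds:
  assumes "c^2 < 1" "0 < E" "E < 1"
  shows "0 < bloch_length E c" "bloch_length E c < 1"
proof -
  have "0 < (1 - c^2) * E" "0 < (1 - c^2) * (1 - E)" using assms by simp_all
  moreover have "0 \<le> c^2" by simp
  ultimately have "0 < c^2 + (1 - c^2) * E" "c^2 + (1 - c^2) * E < 1"
    by (linarith, simp add: algebra_simps)
  then show "0 < bloch_length E c" "bloch_length E c < 1"
    by (simp_all add: bloch_length_def)
qed

lemma bloch_length_le_1:
  assumes "c^2 \<le> 1" "0 \<le> E" "E \<le> 1"
  shows "0 \<le> bloch_length E c" "bloch_length E c \<le> 1"
proof -
  have "0 \<le> (1 - c^2) * E" "(1 - c^2) * E \<le> 1 - c^2"
    using assms by (simp_all add: mult_left_le)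
  then show "0 \<le> bloch_length E c" "bloch_length E c \<le> 1"
    by (simp_all add: bloch_length_def)
qed

text \<open>Binary entropy in natural logarithms, valid everywhere because \<open>0 * ln 0 = 0\<close>.\<close>

lemma binary_entropy_ln: "binary_entropy x = - (x * ln x + (1 - x) * ln (1 - x)) / ln 2"
  unfolding binary_entropy_def log_def by (auto simp: field_simps)

text \<open>Continuity of the binary entropy on \<open>[0,1]\<close>, including the endpoints where
  \<open>x ln x \<longrightarrow> 0\<close>; needed for monotonicity up to \<open>g = 0\<close>.\<close>

lemma continuous_on_x_ln_x: "continuous_on {0..} (\<lambda>x::real. x * ln x)"
  unfolding continuous_on_def
proof
  fix x :: real assume "x \<in> {0..}"
  show "((\<lambda>x. x * ln x) \<longlongrightarrow> x * ln x) (at x within {0..})"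
  proof (cases "x = 0")
    case True
    have "((\<lambda>x::real. x * ln x) \<longlongrightarrow> 0) (at_right 0)" by real_asymp
    then show ?thesis using True by (simp add: at_within_Ici_at_right)
  next
    case False
    with \<open>x \<in> {0..}\<close> have "isCont (\<lambda>x. x * ln x) x" by (auto intro!: continuous_intros)
    then show ?thesis using continuous_at_imp_continuous_at_within continuous_within by blast
  qed
qed

lemma continuous_on_binary_entropy: "continuous_on {0..1} binary_entropy"
proof -
  have x_ln_x: "continuous_on {0..1} (\<lambda>x::real. x * ln x)"
    by (rule continuous_on_subset[OF continuous_on_x_ln_x]) auto
  have mirrored: "continuous_on {0..1} (\<lambda>x::real. (1 - x) * ln (1 - x))"
    by (rule continuous_on_compose2[OF continuous_on_x_ln_x]) (auto intro!: continuous_intros)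
  show ?thesis
    unfolding binary_entropy_ln[abs_def] by (intro continuous_intros x_ln_x mirrored) simp
qed

lemma binary_entropy_has_derivative:
  assumes "0 < x" "x < 1"
  shows "(binary_entropy has_real_derivative (ln (1 - x) - ln x) / ln 2) (at x)"
proof -
  have "((\<lambda>x. - (x * ln x + (1 - x) * ln (1 - x))) has_real_derivative ln (1 - x) - ln x) (at x)"
    using assms by (auto intro!: derivative_eq_intros)
  then show ?thesis
    unfolding binary_entropy_ln[abs_def] by (rule DERIV_cdivide)
qed

text \<open>Differentiating the entropy of the device state with respect to the decoherence
  factor \<open>E\<close> produces the kernel \<open>K(E,c)\<close>; for \<open>c\<^sup>2 = 1\<close> the state stays pure.\<close>

lemma entropy_of_bloch_has_derivative:
  assumes c: "c^2 \<le> 1" and E: "0 < E" "E < 1"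
  shows "((\<lambda>E. binary_entropy ((1 + bloch_length E c) / 2)) has_real_derivative
           - entropy_slope E c / (2 * ln 2)) (at E)"
proof (cases "c^2 = 1")
  case True
  then have "(\<lambda>E. binary_entropy ((1 + bloch_length E c) / 2)) = (\<lambda>_. 0)"
    by (simp add: fun_eq_iff bloch_length_def binary_entropy_def)
  moreover have "entropy_slope E c = 0" using True by (simp add: entropy_slope_def)
  ultimately show ?thesis by simp
next
  case False
  with c have c1: "c^2 < 1" by simp
  define l where "l = bloch_length E c"
  have l: "0 < l" "l < 1" using bloch_length_bounds[OF c1 E] by (simp_all add: l_def)
  have "0 < c^2 + (1 - c^2) * E" using l by (simp add: l_def bloch_length_def)
  then have dl: "((\<lambda>E. bloch_length E c) has_real_derivative (1 - c^2) / (2 * l)) (at E)"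
    unfolding bloch_length_def[abs_def] l_def
    by (auto intro!: derivative_eq_intros simp: divide_simps)
  have "ln (1 - (1 + l) / 2) - ln ((1 + l) / 2) = ln (1 - l) - ln (1 + l)"
    using l by (simp add: ln_div field_simps)
  then have dH: "(binary_entropy has_real_derivative (ln (1 - l) - ln (1 + l)) / ln 2)
                   (at ((1 + l) / 2))"
    using binary_entropy_has_derivative[of "(1 + l) / 2"] l by simp
  have "((\<lambda>E. (1 + bloch_length E c) / 2) has_real_derivative (1 - c^2) / (2 * l) / 2) (at E)"
    using dl l by (auto intro!: derivative_eq_intros simp: field_simps)
  from DERIV_chain2[OF dH[unfolded l_def] this[unfolded l_def]]
  have "((\<lambda>E. binary_entropy ((1 + bloch_length E c) / 2)) has_real_derivative
          (ln (1 - l) - ln (1 + l)) / ln 2 * ((1 - c^2) / (2 * l) / 2)) (at E)"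
    unfolding l_def .
  moreover have "(ln (1 - l) - ln (1 + l)) / ln 2 * ((1 - c^2) / (2 * l) / 2)
                   = - entropy_slope E c / (2 * ln 2)"
    using l by (simp add: entropy_slope_def l_def[symmetric] field_simps)
  ultimately show ?thesis by simp
qed

lemma decoherence_bounds:
  "0 < decoherence \<Delta> g" "decoherence \<Delta> g \<le> 1"
  "\<Delta> \<noteq> 0 \<Longrightarrow> g \<noteq> 0 \<Longrightarrow> decoherence \<Delta> g < 1"
  by (simp_all add: decoherence_def)

lemma decoherence_has_derivative:
  "(decoherence \<Delta> has_real_derivative - 2 * g / \<Delta>^2 * decoherence \<Delta> g) (at g)"
  unfolding decoherence_def[abs_def] divide_inverse
  by (auto intro!: derivative_eq_intros simp: power2_eq_square)

lemma device_entropy_has_derivative: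
  assumes "c^2 \<le> 1" "\<Delta> \<noteq> 0" "g \<noteq> 0"
  shows "(device_entropy \<Delta> c has_real_derivative
           g * decoherence \<Delta> g / (\<Delta>^2 * ln 2) * entropy_slope (decoherence \<Delta> g) c) (at g)"
proof -
  have "(device_entropy \<Delta> c has_real_derivative
          - entropy_slope (decoherence \<Delta> g) c / (2 * ln 2) * (- 2 * g / \<Delta>^2 * decoherence \<Delta> g))
          (at g)"
    unfolding device_entropy_def[abs_def] using assms decoherence_bounds[of \<Delta> g]
    by (intro DERIV_chain2[OF entropy_of_bloch_has_derivative decoherence_has_derivative]) auto
  then show ?thesis by (simp add: field_simps)
qed

lemma continuous_on_device_entropy:
  assumes "c^2 \<le> 1"
  shows "continuous_on UNIV (device_entropy \<Delta> c)"
  unfolding device_entropy_def[abs_def]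
proof (rule continuous_on_compose2[OF continuous_on_binary_entropy])
  show "continuous_on UNIV (\<lambda>g. (1 + bloch_length (decoherence \<Delta> g) c) / 2)"
    unfolding bloch_length_def decoherence_def divide_inverse by (intro continuous_intros)
  show "(\<lambda>g. (1 + bloch_length (decoherence \<Delta> g) c) / 2) ` UNIV \<subseteq> {0..1}"
  proof clarify
    fix g
    show "(1 + bloch_length (decoherence \<Delta> g) c) / 2 \<in> {0..1}"
      using bloch_length_le_1[OF assms less_imp_le[OF decoherence_bounds(1)] decoherence_bounds(2)]
      by simp
  qed
qed

lemma artanh_has_integral:
  fixes r :: real
  assumes r: "0 < r" "r < 1"
  shows "((\<lambda>t. 1 / (1 - r^2 * t^2)) has_integral (ln (1 + r) - ln (1 - r)) / (2 * r)) {0..1}"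
proof -
  define F where "F t = (ln (1 + r * t) - ln (1 - r * t)) / (2 * r)" for t
  have "((\<lambda>t. 1 / (1 - r^2 * t^2)) has_integral F 1 - F 0) {0..1}"
  proof (rule fundamental_theorem_of_calculus)
    fix t :: real assume t: "t \<in> {0..1}"
    have "r * t \<le> r" using t r by (simp add: mult_left_le)
    then have rt: "0 \<le> r * t" "r * t < 1" using t r by (simp, linarith)
    have "(r * t) * (r * t) \<le> r * t" using rt by (intro mult_left_le) auto
    with rt have "r * (r * (t * t)) < 1" by (simp add: algebra_simps)
    with rt have "(F has_real_derivative 1 / (1 - r^2 * t^2)) (at t)"
      unfolding F_def[abs_def] using r
      by (auto intro!: derivative_eq_intros simp: field_simps power2_eq_square)
    then show "(F has_vector_derivative 1 / (1 - r^2 * t^2)) (at t within {0..1})"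
      by (simp add: has_real_derivative_iff_has_vector_derivative has_vector_derivative_at_within)
  qed simp
  then show ?thesis by (simp add: F_def)
qed

lemma entropy_slope_has_integral:
  assumes c: "c^2 \<le> 1" and E: "0 < E" "E < 1"
  shows "((\<lambda>t. (1 - c^2) / (1 - t^2 * (c^2 + (1 - c^2) * E))) has_integral entropy_slope E c)
           {0<..<1}"
proof (cases "c^2 = 1")
  case True
  then show ?thesis by (simp add: entropy_slope_def)
next
  case False
  with c have "c^2 < 1" by simp
  define l where "l = bloch_length E c"
  have l: "0 < l" "l < 1" using bloch_length_bounds[OF \<open>c^2 < 1\<close> E] by (simp_all add: l_def)
  have l_square: "l^2 = c^2 + (1 - c^2) * E"
    using l by (simp add: l_def bloch_length_def)
  have "((\<lambda>t. (1 - c^2) * (1 / (1 - l^2 * t^2))) has_integral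
          (1 - c^2) * ((ln (1 + l) - ln (1 - l)) / (2 * l))) {0..1}"
    by (rule has_integral_mult_right[OF artanh_has_integral[OF l]])
  then show ?thesis
    unfolding l_square[symmetric]
    by (simp add: has_integral_Icc_iff_Ioo entropy_slope_def l_def[symmetric] mult.commute)
qed

text \<open>Concavity of \<open>x \<mapsto> (1 - x\<^sup>2)/(A - B x\<^sup>2)\<close> on \<open>[-1,1]\<close> for \<open>0 \<le> B < A\<close>, in the form that
  the graph lies below its tangent line at any point \<open>y\<close>.\<close>

lemma ratio_below_tangent:
  fixes A B x y :: real
  assumes B: "0 \<le> B" and AB: "B < A" and x: "x^2 \<le> 1" and y: "y^2 \<le> 1"
  shows "(1 - x^2) / (A - B * x^2)
           \<le> (1 - y^2) / (A - B * y^2) + (- 2 * (A - B) * y / (A - B * y^2)^2) * (x - y)"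
proof -
  define a b where "a = A - B * x^2" and "b = A - B * y^2"
  have "B * x^2 \<le> B" "B * y^2 \<le> B" using x y B by (simp_all add: mult_left_le)
  then have a: "0 < a" and b: "0 < b" using AB by (simp_all add: a_def b_def)
  have "B * (x + y)^2 \<ge> 0" using B by simp
  then have "A + B * y * (2 * x + y) \<ge> a"
    by (simp add: a_def power2_eq_square algebra_simps)
  then have pos: "A + B * y * (2 * x + y) > 0" using a by linarith
  have "(1 - x^2) / a - ((1 - y^2) / b - 2 * (A - B) * y * (x - y) / b^2)
          = ((1 - x^2) * b^2 - (1 - y^2) * a * b + 2 * (A - B) * y * (x - y) * a) / (a * b^2)"
    using a b by (simp add: field_simps power2_eq_square)
  also have "\<dots> = - ((A - B) * (x - y)^2 * (A + B * y * (2 * x + y))) / (a * b^2)"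
    unfolding a_def b_def by algebra
  also have "\<dots> \<le> 0"
    using AB pos a b by (intro divide_nonpos_pos) (auto intro!: mult_nonneg_nonneg)
  finally have "(1 - x^2) / a \<le> (1 - y^2) / b - 2 * (A - B) * y * (x - y) / b^2"
    by linarith
  moreover have "(- 2 * (A - B) * y / b^2) * (x - y) = - (2 * (A - B) * y * (x - y) / b^2)"
    by (metis minus_divide_left mult_minus_left times_divide_eq_left)
  ultimately show ?thesis unfolding a_def b_def by linarith
qed

text \<open>The integrand of \<open>K(E,\<cdot>)\<close> at a fixed \<open>t \<in> [0,1)\<close> is of this form, with
  \<open>A = 1 - t\<^sup>2 E\<close> and \<open>B = t\<^sup>2 (1 - E)\<close>, so it too lies below its tangent lines.\<close>

lemma slope_integrand_below_tangent:
  fixes t E x y :: real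
  assumes t: "0 \<le> t" "t < 1" and E: "0 < E" "E < 1" and x: "x^2 \<le> 1" and y: "y^2 \<le> 1"
  shows "(1 - x^2) / (1 - t^2 * (x^2 + (1 - x^2) * E))
           \<le> (1 - y^2) / (1 - t^2 * (y^2 + (1 - y^2) * E))
              + (- 2 * (1 - t^2) * y / (1 - t^2 * (y^2 + (1 - y^2) * E))^2) * (x - y)"
proof -
  have "t^2 < 1" using t by (simp add: abs_square_less_1)
  then have AB: "t^2 * (1 - E) < 1 - t^2 * E" by (simp add: algebra_simps)
  have B: "0 \<le> t^2 * (1 - E)" using E by simp
  from ratio_below_tangent[OF B AB x y]
  show ?thesis by (simp add: algebra_simps)
qed

lemma weighted_mean_below_tangent:
  fixes p f c :: "'a \<Rightarrow> real"
  assumes "finite I" "\<And>i. i \<in> I \<Longrightarrow> 0 \<le> p i" "(\<Sum>i\<in>I. p i) = 1"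
    and "(\<Sum>i\<in>I. p i * c i) = m"
    and "\<And>i. i \<in> I \<Longrightarrow> f i \<le> F + K * (c i - m)"
  shows "(\<Sum>i\<in>I. p i * f i) \<le> F"
proof -
  have "(\<Sum>i\<in>I. p i * f i) \<le> (\<Sum>i\<in>I. p i * (F + K * (c i - m)))"
    using assms by (intro sum_mono mult_left_mono) auto
  also have "\<dots> = F * (\<Sum>i\<in>I. p i) + K * ((\<Sum>i\<in>I. p i * c i) - m * (\<Sum>i\<in>I. p i))"
    by (simp add: algebra_simps sum_subtractf sum_distrib_left sum_distrib_right sum.distrib)
  also have "\<dots> = F" using assms(3,4) by simp
  finally show ?thesis .
qed

lemma weighted_mean_square_le_1:
  fixes p c :: "'a \<Rightarrow> real"
  assumes "\<And>i. i \<in> I \<Longrightarrow> 0 \<le> p i" "(\<Sum>i\<in>I. p i) = 1" "\<And>i. i \<in> I \<Longrightarrow> (c i)^2 \<le> 1"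
  shows "(\<Sum>i\<in>I. p i * c i)^2 \<le> 1"
proof -
  have "\<bar>\<Sum>i\<in>I. p i * c i\<bar> \<le> (\<Sum>i\<in>I. \<bar>p i * c i\<bar>)" by (rule sum_abs)
  also have "\<dots> \<le> (\<Sum>i\<in>I. p i)"
    using assms(1,3) by (intro sum_mono) (simp add: abs_mult abs_square_le_1 mult_left_le)
  finally show ?thesis using assms(2) by (simp add: abs_square_le_1)
qed

text \<open>Concavity of \<open>K(E,\<cdot>)\<close> in Jensen form: integrate the pointwise tangent bounds.\<close>

lemma entropy_slope_jensen:
  fixes p c :: "'a \<Rightarrow> real"
  assumes I: "finite I" and p: "\<And>i. i \<in> I \<Longrightarrow> 0 \<le> p i" "(\<Sum>i\<in>I. p i) = 1"
    and c: "\<And>i. i \<in> I \<Longrightarrow> (c i)^2 \<le> 1" and E: "0 < E" "E < 1"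
  shows "(\<Sum>i\<in>I. p i * entropy_slope E (c i)) \<le> entropy_slope E (\<Sum>i\<in>I. p i * c i)"
proof -
  define m where "m = (\<Sum>i\<in>I. p i * c i)"
  have m: "m^2 \<le> 1" unfolding m_def using p c by (rule weighted_mean_square_le_1)
  define \<phi> where "\<phi> x t = (1 - x^2) / (1 - t^2 * (x^2 + (1 - x^2) * E))" for x t :: real
  have mean: "((\<lambda>t. \<Sum>i\<in>I. p i * \<phi> (c i) t) has_integral (\<Sum>i\<in>I. p i * entropy_slope E (c i)))
                {0<..<1}"
    unfolding \<phi>_def using c E
    by (intro has_integral_sum has_integral_mult_right entropy_slope_has_integral I) auto
  have at_mean: "(\<phi> m has_integral entropy_slope E m) {0<..<1}"
    unfolding \<phi>_def[abs_def] using m E by (rule entropy_slope_has_integral)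
  have "(\<Sum>i\<in>I. p i * entropy_slope E (c i)) \<le> entropy_slope E m"
  proof (rule has_integral_le[OF mean at_mean])
    fix t :: real assume "t \<in> {0<..<1}"
    then have t: "0 \<le> t" "t < 1" by auto
    define K where "K = - 2 * (1 - t^2) * m / (1 - t^2 * (m^2 + (1 - m^2) * E))^2"
    have "\<phi> (c i) t \<le> \<phi> m t + K * (c i - m)" if "i \<in> I" for i
      using slope_integrand_below_tangent[OF t E c[OF that] m] unfolding \<phi>_def K_def .
    then show "(\<Sum>i\<in>I. p i * \<phi> (c i) t) \<le> \<phi> m t"
      using m_def by (intro weighted_mean_below_tangent[OF I p]) auto
  qed
  then show ?thesis by (simp add: m_def)
qed

lemma info_gain_device_entropy:
  "info_gain n p c \<Delta> =
     (\<lambda>g. device_entropy \<Delta> (\<Sum>i<n. p i * c i) g - (\<Sum>i<n. p i * device_entropy \<Delta> (c i) g))"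
  by (simp add: fun_eq_iff info_gain_def Let_def device_entropy_def bloch_length_def decoherence_def)

text \<open>For \<open>g > 0\<close> the derivative of the information gain is a positive multiple of
  \<open>K(E, \<Sum> p\<^sub>i c\<^sub>i) - \<Sum> p\<^sub>i K(E, c\<^sub>i)\<close>, which is nonnegative by concavity of \<open>K(E,\<cdot>)\<close>.\<close>

lemma info_gain_nonneg_derivative:
  assumes p: "\<And>i. i < n \<Longrightarrow> 0 \<le> p i" "(\<Sum>i<n. p i) = 1"
    and c: "\<And>i. i < n \<Longrightarrow> (c i)^2 \<le> 1" and \<Delta>: "\<Delta> \<noteq> 0" and g: "0 < g"
  shows "\<exists>D. (info_gain n p c \<Delta> has_real_derivative D) (at g) \<and> 0 \<le> D"
proof -
  define m where "m = (\<Sum>i<n. p i * c i)"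
  define E where "E = decoherence \<Delta> g"
  define k where "k = g * E / (\<Delta>^2 * ln 2)"
  have m: "m^2 \<le> 1" unfolding m_def using p c by (intro weighted_mean_square_le_1) auto
  have E: "0 < E" "E < 1" using decoherence_bounds[of \<Delta> g] \<Delta> g by (simp_all add: E_def)
  have derivative: "(info_gain n p c \<Delta> has_real_derivative
          k * entropy_slope E m - (\<Sum>i<n. p i * (k * entropy_slope E (c i)))) (at g)"
    unfolding info_gain_device_entropy m_def[symmetric] k_def E_def using m c \<Delta> g
    by (intro DERIV_diff DERIV_sum DERIV_cmult device_entropy_has_derivative) auto
  have "(\<Sum>i<n. p i * entropy_slope E (c i)) \<le> entropy_slope E m"
    unfolding m_def using p c E by (intro entropy_slope_jensen) auto
  moreover have "0 \<le> k" using g E(1) by (simp add: k_def)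
  ultimately have "k * (\<Sum>i<n. p i * entropy_slope E (c i)) \<le> k * entropy_slope E m"
    by (rule mult_left_mono)
  moreover have "(\<Sum>i<n. p i * (k * entropy_slope E (c i))) = k * (\<Sum>i<n. p i * entropy_slope E (c i))"
    by (simp add: sum_distrib_left mult.left_commute)
  ultimately have "0 \<le> k * entropy_slope E m - (\<Sum>i<n. p i * (k * entropy_slope E (c i)))"
    by linarith
  with derivative show ?thesis by blast
qed

theorem theorem1:
  fixes n :: nat and p c :: "nat \<Rightarrow> real" and \<Delta> :: real
  assumes "\<And>i. i < n \<Longrightarrow> p i > 0"
    and "(\<Sum>i<n. p i) = 1"
    and "\<And>i. i < n \<Longrightarrow> -1 \<le> c i \<and> c i \<le> 1"
    and "\<Delta> > 0"
  shows "mono_on {0..} (info_gain n p c \<Delta>)"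
proof -
  have p: "\<And>i. i < n \<Longrightarrow> 0 \<le> p i" using assms(1) by (simp add: less_imp_le)
  have c: "\<And>i. i < n \<Longrightarrow> (c i)^2 \<le> 1" using assms(3) by (simp add: abs_square_le_1 abs_le_iff)
  have "(\<Sum>i<n. p i * c i)^2 \<le> 1" using p assms(2) c by (intro weighted_mean_square_le_1) auto
  then have continuous: "continuous_on UNIV (info_gain n p c \<Delta>)"
    unfolding info_gain_device_entropy using c
    by (intro continuous_intros continuous_on_device_entropy) auto
  have derivative: "\<exists>D. (info_gain n p c \<Delta> has_real_derivative D) (at g) \<and> 0 \<le> D" if "0 < g" for g
    using info_gain_nonneg_derivative[OF p assms(2) c] assms(4) that by simp
  show ?thesis
  proof (rule mono_onI)
    fix x y :: real assume "x \<in> {0..}" "x \<le> y"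
    show "info_gain n p c \<Delta> x \<le> info_gain n p c \<Delta> y"
    proof (rule DERIV_nonneg_imp_increasing_open[OF \<open>x \<le> y\<close>])
      fix z assume "x < z"
      with \<open>x \<in> {0..}\<close> show "\<exists>D. (info_gain n p c \<Delta> has_real_derivative D) (at z) \<and> 0 \<le> D"
        by (intro derivative) simp
    qed (rule continuous_on_subset[OF continuous], simp)
  qed
qed

end
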